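(* Let $M$ be an irreducible $\mathcal D_{K}$-module, $K=k((z))$, $k$ algebraically closed, with $\mathrm{slope}(M)>0$, realized as $M=k((z^{1/r}))$ with derivation $\partial_z=d/dz+f(z)$, where $f(z)=Cz^{-\mathrm{slope}(M)-1}+\dots\in k((z^{1/r}))$, $C\ne0$. Let $P=\frac1C\partial_z$, and for $\alpha,\gamma\in k$ let $P^\alpha:z^\gamma k((z^{1/r}))\to z^{\gamma-(1+\mathrm{slope}(M))\alpha}k((z^{1/r}))$ be the complex powers (defined by polynomial interpolation in $\alpha$ of the coefficients of the integer powers $P^\alpha$). Then for every $\alpha\in k$: (1) $P^\alpha$ is invertible (with inverse $P^{-\alpha}$); (2) $P^\alpha\partial_z=\partial_zP^\alpha$; (3) $P^\alpha z=zP^\alpha+\frac{\alpha}{C}P^{\alpha-1}$.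
   Context: $k$ has characteristic zero. $z^\gamma k((z^{1/r}))$ denotes the space of series $\sum_{i\ge -N}c_{\gamma+i/r}z^{\gamma+i/r}$, a one-dimensional $k((z^{1/r}))$-vector space, on which $d/dz$ acts termwise and $\partial_z=d/dz+f$ acts; it depends on $\gamma$ only mod $\frac1r\mathbb Z$. For integer $\alpha\ge0$, $P^\alpha(z^\beta)=\sum_{i\ge0}p_i(\alpha,\beta)z^{\beta-(1+\mathrm{slope}M)\alpha+i/r}$ with $p_0=1$ and coefficients $p_i(\alpha,\beta)$ polynomial in $(\alpha,\beta)$; $P^\alpha$ for arbitrary $\alpha\in k$ is defined by the same formula using these polynomials. *)

theory Defs
  imports "HOL-Computational_Algebra.Polynomial"
begin

text \<open>A series in z^gamma k((z^(1/r))) is represented by its coefficient function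
  (exponent in k  to coefficient in k), supported on gamma + (1/r) Z and bounded below.\<close>

definition in_space :: "nat \<Rightarrow> 'k::field_char_0 \<Rightarrow> ('k \<Rightarrow> 'k) \<Rightarrow> bool" where
  "in_space r \<gamma> c \<longleftrightarrow> (\<exists>N::int. \<forall>e. c e \<noteq> 0 \<longrightarrow>
      (\<exists>i::int. i \<ge> - N \<and> e = \<gamma> + of_int i / of_nat r))"

definition space :: "nat \<Rightarrow> 'k::field_char_0 \<Rightarrow> ('k \<Rightarrow> 'k) set" where
  "space r \<gamma> = {c. in_space r \<gamma> c}"

definition ddz :: "('k::field_char_0 \<Rightarrow> 'k) \<Rightarrow> 'k \<Rightarrow> 'k" where
  "ddz c = (\<lambda>e. (e + 1) * c (e + 1))"

text \<open>product of two series (Cauchy product; finite sums for series bounded below)\<close>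
definition smul :: "('k::field_char_0 \<Rightarrow> 'k) \<Rightarrow> ('k \<Rightarrow> 'k) \<Rightarrow> 'k \<Rightarrow> 'k" where
  "smul g c = (\<lambda>e. \<Sum>x | g x \<noteq> 0 \<and> c (e - x) \<noteq> 0. g x * c (e - x))"

definition mulz :: "('k::field_char_0 \<Rightarrow> 'k) \<Rightarrow> 'k \<Rightarrow> 'k" where
  "mulz c = (\<lambda>e. c (e - 1))"

definition dop :: "('k::field_char_0 \<Rightarrow> 'k) \<Rightarrow> ('k \<Rightarrow> 'k) \<Rightarrow> 'k \<Rightarrow> 'k" where
  "dop f c = (\<lambda>e. ddz c e + smul f c e)"

definition Pop :: "'k::field_char_0 \<Rightarrow> ('k \<Rightarrow> 'k) \<Rightarrow> ('k \<Rightarrow> 'k) \<Rightarrow> 'k \<Rightarrow> 'k" where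
  "Pop C f c = (\<lambda>e. dop f c e / C)"

definition mono :: "'k::field_char_0 \<Rightarrow> 'k \<Rightarrow> 'k" where
  "mono \<beta> = (\<lambda>e. if e = \<beta> then 1 else 0)"

definition slope :: "nat \<Rightarrow> nat \<Rightarrow> 'k::field_char_0" where
  "slope r m = of_nat m / of_nat r"

definition pnat :: "nat \<Rightarrow> nat \<Rightarrow> 'k::field_char_0 \<Rightarrow> ('k \<Rightarrow> 'k) \<Rightarrow> nat \<Rightarrow> nat \<Rightarrow> 'k \<Rightarrow> 'k" where
  "pnat r m C f i n \<beta> =
     ((Pop C f ^^ n) (mono \<beta>)) (\<beta> - (1 + slope r m) * of_nat n + of_nat i / of_nat r)"

definition pcoef :: "nat \<Rightarrow> nat \<Rightarrow> 'k::field_char_0 \<Rightarrow> ('k \<Rightarrow> 'k) \<Rightarrow> nat \<Rightarrow> 'k \<Rightarrow> 'k \<Rightarrow> 'k" where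
  "pcoef r m C f i \<alpha> \<beta> =
     poly (THE q. \<forall>n::nat. poly q (of_nat n) = pnat r m C f i n \<beta>) \<alpha>"

text \<open>P^alpha applied to a series: P^alpha(sum c_beta z^beta) = sum c_beta P^alpha(z^beta),
  with P^alpha(z^beta) = sum_i p_i(alpha,beta) z^(beta - (1+slope) alpha + i/r)\<close>
definition Ppow :: "nat \<Rightarrow> nat \<Rightarrow> 'k::field_char_0 \<Rightarrow> ('k \<Rightarrow> 'k) \<Rightarrow> 'k \<Rightarrow> ('k \<Rightarrow> 'k) \<Rightarrow> 'k \<Rightarrow> 'k" where
  "Ppow r m C f \<alpha> c = (\<lambda>e. \<Sum>\<beta> | c \<beta> \<noteq> 0 \<and>
        (\<exists>i::nat. e = \<beta> - (1 + slope r m) * \<alpha> + of_nat i / of_nat r).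
      c \<beta> * pcoef r m C f
        (THE i::nat. e = \<beta> - (1 + slope r m) * \<alpha> + of_nat i / of_nat r) \<alpha> \<beta>)"

text \<open>Irreducibility of M = k((z^(1/r))) with partial_z = d/dz + f as a D_K-module,
  K = k((z)): the only K-subspaces stable under partial_z are 0 and M.\<close>
definition irreducible_DK :: "nat \<Rightarrow> ('k::field_char_0 \<Rightarrow> 'k) \<Rightarrow> bool" where
  "irreducible_DK r f \<longleftrightarrow> (\<forall>S. S \<subseteq> space r 0 \<and> (\<lambda>_. 0) \<in> S \<and>
      (\<forall>a\<in>S. \<forall>b\<in>S. (\<lambda>e. a e + b e) \<in> S) \<and>
      (\<forall>g a. g \<in> space 1 0 \<and> a \<in> S \<longrightarrow> smul g a \<in> S) \<and>
      (\<forall>a\<in>S. dop f a \<in> S)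
    \<longrightarrow> S = {\<lambda>_. 0} \<or> S = space r 0)"

end

theory Submission
  imports Defs
begin

(*
  A series is written as  ser g w = \<Sum>_n w n z^(g + n/r); every element of space r \<gamma>
  has this form.  P maps z^\<beta> to \<Sum>_i a_i(\<beta>) z^(\<beta> - \<lambda> + i/r) with a_0 = 1, so P^n and P^\<alpha> act
  on series through "kernels" and compose by a convolution rule.  The coefficients p_i(n,\<beta>)
  of P^n satisfy
    (A)  the composition law  P^(a+b) = P^b P^a,   and
    (Z)  the shift law  p_i(n,\<beta>+1) = p_i(n,\<beta>) + n/C p_(i-m)(n-1,\<beta>),
         i.e. P^n z = z P^n + n/C P^(n-1).
  Each p_i(n,\<beta>) is a bivariate polynomial in (n,\<beta>) (Faulhaber-type summation), so the
  coefficient used by Ppow is its polynomial interpolant.  Two bivariate polynomial functions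
  agreeing on \<nat>\<times>\<nat> are equal, so (A) and (Z) hold for arbitrary exponents.  Hence
  P^b P^a = P^(a+b) and P^0 = id (invertibility), \<partial>_z = C P^1 commutes with P^\<alpha> by the group
  law, and (Z) gives P^\<alpha> z = z P^\<alpha> + \<alpha>/C P^(\<alpha>-1).
*)

section \<open>Bivariate polynomial functions\<close>

text \<open>F is given by a bivariate polynomial: F a b = Q(a,b), with Q a polynomial in a whose
  coefficients are polynomials in b.\<close>
definition bipoly :: "('a::comm_ring_1 \<Rightarrow> 'a \<Rightarrow> 'a) \<Rightarrow> bool" where
  "bipoly F \<longleftrightarrow> (\<exists>Q. \<forall>a b. F a b = poly (poly Q [:a:]) b)"

lemma bipoly_const: "bipoly (\<lambda>a b. c)"
  unfolding bipoly_def by (rule exI[of _ "[:[:c:]:]"]) simp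

lemma bipoly_fst: "bipoly (\<lambda>a b. a)"
  unfolding bipoly_def by (rule exI[of _ "[:0,1:]"]) simp

lemma bipoly_snd: "bipoly (\<lambda>a b. b)"
  unfolding bipoly_def by (rule exI[of _ "[:[:0,1:]:]"]) simp

lemma bipoly_add: "bipoly F \<Longrightarrow> bipoly G \<Longrightarrow> bipoly (\<lambda>a b. F a b + G a b)"
  unfolding bipoly_def by (metis poly_add)

lemma bipoly_mult: "bipoly F \<Longrightarrow> bipoly G \<Longrightarrow> bipoly (\<lambda>a b. F a b * G a b)"
  unfolding bipoly_def by (metis poly_mult)

lemma bipoly_uminus: "bipoly F \<Longrightarrow> bipoly (\<lambda>a b. - F a b)"
  unfolding bipoly_def by (metis poly_minus)

lemma bipoly_diff: "bipoly F \<Longrightarrow> bipoly G \<Longrightarrow> bipoly (\<lambda>a b. F a b - G a b)"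
  using bipoly_add[of F "\<lambda>a b. - G a b"] bipoly_uminus[of G] by simp

lemma bipoly_divide: "bipoly F \<Longrightarrow> bipoly (\<lambda>a b. F a b / (c::'a::field))"
  using bipoly_mult[OF _ bipoly_const[of "inverse c"], of F] by (simp add: divide_inverse)

lemma bipoly_sum:
  "finite A \<Longrightarrow> (\<And>x. x \<in> A \<Longrightarrow> bipoly (F x)) \<Longrightarrow> bipoly (\<lambda>a b. \<Sum>x\<in>A. F x a b)"
proof (induction A rule: finite_induct)
  case empty then show ?case using bipoly_const[of 0] by simp
next
  case (insert x A)
  then show ?case using bipoly_add[of "F x" "\<lambda>a b. \<Sum>x\<in>A. F x a b"] by simp
qed

lemma bipoly_if: "bipoly F \<Longrightarrow> bipoly G \<Longrightarrow> bipoly (\<lambda>a b. if P then F a b else G a b)"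
  by (cases P) simp_all

lemma bipoly_poly: "bipoly G \<Longrightarrow> bipoly (\<lambda>a b. poly q (G a b))"
proof (induction q)
  case 0 then show ?case using bipoly_const[of 0] by simp
next
  case (pCons c q)
  then show ?case
    using bipoly_add[OF bipoly_const[of c] bipoly_mult[OF pCons(3) pCons(2)[OF pCons(3)]]] by simp
qed

lemma bipoly_subst:
  assumes "bipoly F" "bipoly G1" "bipoly G2"
  shows "bipoly (\<lambda>a b. F (G1 a b) (G2 a b))"
proof -
  obtain Q where Q: "\<And>a b. F a b = poly (poly Q [:a:]) b"
    using assms(1) unfolding bipoly_def by blast
  have "bipoly (\<lambda>a b. poly (poly Q [:G1 a b:]) (G2 a b))"
  proof (induction Q)
    case 0 then show ?case using bipoly_const[of 0] by simp
  next
    case (pCons c Q)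
    have "bipoly (\<lambda>a b. poly c (G2 a b) + G1 a b * poly (poly Q [:G1 a b:]) (G2 a b))"
      by (intro bipoly_add bipoly_mult bipoly_poly assms pCons)
    then show ?case by (simp add: poly_add poly_mult)
  qed
  then show ?thesis by (simp add: Q)
qed

lemma bipoly_poly_in_fst: "bipoly F \<Longrightarrow> \<exists>q. \<forall>a. F a b = poly q a"
proof -
  assume "bipoly F"
  then obtain Q where Q: "\<And>a b. F a b = poly (poly Q [:a:]) b" unfolding bipoly_def by blast
  have "\<exists>q. \<forall>a. poly (poly Q [:a:]) b = poly q a"
  proof (induction Q)
    case 0 then show ?case by (rule exI[of _ 0]) simp
  next
    case (pCons c Q)
    then obtain q where q: "\<forall>a. poly (poly Q [:a:]) b = poly q a" by blast
    show ?case by (rule exI[of _ "pCons (poly c b) q"]) (simp add: q[rule_format, symmetric])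
  qed
  then show ?thesis by (simp add: Q)
qed

lemma bipoly_poly_in_snd: "bipoly F \<Longrightarrow> \<exists>q. \<forall>b. F a b = poly q b"
  unfolding bipoly_def by blast

lemma poly_vanishing_on_nats:
  fixes q :: "'a::field_char_0 poly"
  assumes "\<And>n. poly q (of_nat n) = 0"
  shows "q = 0"
proof (rule ccontr)
  assume "q \<noteq> 0"
  then have "finite {x. poly q x = 0}" by (rule poly_roots_finite)
  moreover have "range (of_nat :: nat \<Rightarrow> 'a) \<subseteq> {x. poly q x = 0}" using assms by auto
  ultimately have "finite (range (of_nat :: nat \<Rightarrow> 'a))" by (rule finite_subset[rotated])
  moreover have "inj (of_nat :: nat \<Rightarrow> 'a)" by (simp add: inj_def)
  ultimately show False using finite_imageD by fastforce
qed

lemma polyfun_vanishing_on_nats: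
  fixes g :: "'a::field_char_0 \<Rightarrow> 'a"
  assumes "\<exists>q. \<forall>x. g x = poly q x" "\<And>n. g (of_nat n) = 0"
  shows "g x = 0"
  using assms poly_vanishing_on_nats by (metis poly_0)

text \<open>Identity principle: bivariate polynomial functions agreeing on \<nat>\<times>\<nat> agree everywhere.
  This is what transfers identities from integer to arbitrary exponents.\<close>
lemma bipoly_zero:
  fixes F :: "'a::field_char_0 \<Rightarrow> 'a \<Rightarrow> 'a"
  assumes "bipoly F" "\<And>n k. F (of_nat n) (of_nat k) = 0"
  shows "F a b = 0"
proof -
  have 1: "F (of_nat n) y = 0" for n y
    by (rule polyfun_vanishing_on_nats[of "\<lambda>y. F (of_nat n) y"])
      (use bipoly_poly_in_snd[OF assms(1)] assms(2) in auto)
  show ?thesis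
    by (rule polyfun_vanishing_on_nats[of "\<lambda>x. F x b"]) (use bipoly_poly_in_fst[OF assms(1)] 1 in auto)
qed

lemma bipoly_eq:
  fixes F :: "'a::field_char_0 \<Rightarrow> 'a \<Rightarrow> 'a"
  assumes "bipoly F" "bipoly G" "\<And>n k. F (of_nat n) (of_nat k) = G (of_nat n) (of_nat k)"
  shows "F a b = G a b"
  using bipoly_zero[OF bipoly_diff[OF assms(1,2)]] assms(3) by simp

text \<open>Faulhaber: the power sum \<Sum>_{k<n} k^u is a polynomial in n.  Proof by strong induction,
  telescoping (k+1)^(u+1) - k^(u+1) with the binomial theorem.\<close>
lemma power_sum_polynomial:
  "\<exists>q::'a::field_char_0 poly. \<forall>n. poly q (of_nat n) = (\<Sum>k<n. (of_nat k::'a) ^ u)"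
proof (induction u rule: less_induct)
  case (less u)
  define qs where "qs t = (SOME q::'a poly. \<forall>n. poly q (of_nat n) = (\<Sum>k<n. (of_nat k::'a) ^ t))" for t
  have qs: "poly (qs t) (of_nat n) = (\<Sum>k<n. of_nat k ^ t)" if "t < u" for t n
    using someI_ex[OF less[OF that]] unfolding qs_def by blast
  define q where "q = smult (1 / of_nat (Suc u))
    (monom 1 (Suc u) - (\<Sum>t<u. smult (of_nat (Suc u choose t)) (qs t)))"
  have key: "(of_nat n::'a) ^ Suc u = (\<Sum>t<u. of_nat (Suc u choose t) * (\<Sum>k<n. of_nat k ^ t))
      + of_nat (Suc u) * (\<Sum>k<n. of_nat k ^ u)" for n
  proof -
    have "(of_nat n::'a) ^ Suc u = (\<Sum>k<n. of_nat (Suc k) ^ Suc u - of_nat k ^ Suc u)"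
      using sum_lessThan_telescope[of "\<lambda>k. (of_nat k::'a) ^ Suc u" n] by simp
    also have "\<dots> = (\<Sum>k<n. (\<Sum>t<u. of_nat (Suc u choose t) * of_nat k ^ t) + of_nat (Suc u) * of_nat k ^ u)"
    proof (rule sum.cong[OF refl])
      fix k
      have "(of_nat (Suc k)::'a) ^ Suc u = (of_nat k + 1) ^ Suc u" by (simp add: add.commute)
      also have "\<dots> = (\<Sum>t\<le>Suc u. of_nat (Suc u choose t) * of_nat k ^ t)"
        using binomial_ring[of "of_nat k::'a" 1 "Suc u"] by simp
      also have "\<dots> = (\<Sum>t<u. of_nat (Suc u choose t) * of_nat k ^ t)
          + of_nat (Suc u) * of_nat k ^ u + of_nat k ^ Suc u"
        by (simp add: lessThan_Suc_atMost[symmetric])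
      finally show "(of_nat (Suc k)::'a) ^ Suc u - of_nat k ^ Suc u
          = (\<Sum>t<u. of_nat (Suc u choose t) * of_nat k ^ t) + of_nat (Suc u) * of_nat k ^ u"
        by simp
    qed
    also have "\<dots> = (\<Sum>t<u. of_nat (Suc u choose t) * (\<Sum>k<n. of_nat k ^ t))
        + of_nat (Suc u) * (\<Sum>k<n. of_nat k ^ u)"
      by (simp add: sum.distrib sum_distrib_left sum.swap[of _ "{..<u}"])
    finally show ?thesis .
  qed
  have "poly q (of_nat n) = (\<Sum>k<n. (of_nat k::'a) ^ u)" for n
  proof -
    have "poly q (of_nat n) = (of_nat n ^ Suc u
        - (\<Sum>t<u. of_nat (Suc u choose t) * (\<Sum>k<n. of_nat k ^ t))) / of_nat (Suc u)"
      by (simp add: q_def poly_monom poly_sum qs)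
    also have "\<dots> = (\<Sum>k<n. (of_nat k::'a) ^ u)"
      unfolding key by (simp del: of_nat_Suc)
    finally show ?thesis .
  qed
  then show ?case by blast
qed

lemma bipoly_partial_sum:
  fixes g :: "'a::field_char_0 \<Rightarrow> 'a \<Rightarrow> 'a"
  assumes "bipoly g"
  shows "\<exists>G. bipoly G \<and> (\<forall>n b. G (of_nat n) b = (\<Sum>k<n. g (of_nat k) b))"
proof -
  obtain Q where Q: "\<And>a b. g a b = poly (poly Q [:a:]) b" using assms unfolding bipoly_def by blast
  have "\<forall>u. \<exists>G. bipoly G \<and> (\<forall>n b. G (of_nat n) b = (\<Sum>k<n. of_nat k ^ u * poly (poly Q [:of_nat k:]) b))"
  proof (induction Q)
    case 0 then show ?case using bipoly_const[of 0] by (intro allI exI[of _ "\<lambda>a b. 0"]) simp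
  next
    case (pCons c Q)
    show ?case
    proof
      fix u
      obtain G where G: "bipoly G"
          "\<And>n b. G (of_nat n) b = (\<Sum>k<n. of_nat k ^ Suc u * poly (poly Q [:of_nat k:]) b)"
        using pCons(2) by blast
      obtain q :: "'a poly" where q: "\<And>n. poly q (of_nat n) = (\<Sum>k<n. (of_nat k::'a) ^ u)"
        using power_sum_polynomial by blast
      have "bipoly (\<lambda>a b. poly q a * poly c b + G a b)"
        by (intro bipoly_add bipoly_mult bipoly_poly[OF bipoly_fst] bipoly_poly[OF bipoly_snd] G(1))
      then show "\<exists>G. bipoly G \<and> (\<forall>n b. G (of_nat n) b
          = (\<Sum>k<n. of_nat k ^ u * poly (poly (pCons c Q) [:of_nat k:]) b))"
        by (intro exI[of _ "\<lambda>a b. poly q a * poly c b + G a b"])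
          (simp add: q G(2) sum_distrib_left sum.distrib poly_add poly_mult algebra_simps)
    qed
  qed
  then obtain G where "bipoly G"
      "\<And>n b. G (of_nat n) b = (\<Sum>k<n. of_nat k ^ 0 * poly (poly Q [:of_nat k:]) b)"
    by blast
  then show ?thesis by (intro exI[of _ G]) (simp add: Q)
qed

lemma sum_if_le:
  fixes i m :: nat
  shows "(\<Sum>j\<le>i. if m \<le> i - j then Z j else 0) = (if m \<le> i then (\<Sum>j\<le>i - m. Z j) else (0::'a::comm_monoid_add))"
proof (cases "m \<le> i")
  case True
  have "(\<Sum>j\<le>i. if m \<le> i - j then Z j else 0) = (\<Sum>j\<in>{j\<in>{..i}. m \<le> i - j}. Z j)"
    by (subst sum.inter_filter) auto
  also have "{j\<in>{..i}. m \<le> i - j} = {..i - m}" using True by auto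
  finally show ?thesis using True by simp
next
  case False then show ?thesis by (intro trans[OF sum.neutral]) auto
qed

section \<open>Series on the grid \<gamma> + (1/r)\<nat>\<close>

text \<open>The data of the proposition: f = C z^(-\<lambda>) + (higher terms on the grid -\<lambda> + (1/r)\<nat>),
  where \<lambda> = (m + r)/r = 1 + slope.\<close>
locale connection =
  fixes r m :: nat and C :: "'k::field_char_0" and f :: "'k \<Rightarrow> 'k"
  assumes r: "r > 0" and mpos: "m > 0"
    and f_lead: "f (- of_nat (m + r) / of_nat r) = C"
    and f_low: "\<And>e. f e \<noteq> 0 \<Longrightarrow> \<exists>i::int. i \<ge> - int (m + r) \<and> e = of_int i / of_nat r"
    and C: "C \<noteq> 0"
begin

definition grid :: "nat \<Rightarrow> 'k" where "grid i = of_nat i / of_nat r"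

text \<open>P lowers exponents by lowering = 1 + slope.\<close>
definition lowering :: 'k where "lowering = 1 + slope r m"

definition ser :: "'k \<Rightarrow> (nat \<Rightarrow> 'k) \<Rightarrow> 'k \<Rightarrow> 'k" where
  "ser g w e = (if \<exists>n. e = g + grid n then w (THE n. e = g + grid n) else 0)"

text \<open>The operator z^\<beta> \<mapsto> \<Sum>_i K i \<beta> z^(\<beta> - \<sigma> + i/r), extended termwise; Ppow is of this form.\<close>
definition kernel_op :: "'k \<Rightarrow> (nat \<Rightarrow> 'k \<Rightarrow> 'k) \<Rightarrow> ('k \<Rightarrow> 'k) \<Rightarrow> 'k \<Rightarrow> 'k" where
  "kernel_op \<sigma> K c = (\<lambda>e. \<Sum>\<beta> | c \<beta> \<noteq> 0 \<and> (\<exists>i::nat. e = \<beta> - \<sigma> + grid i).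
      c \<beta> * K (THE i::nat. e = \<beta> - \<sigma> + grid i) \<beta>)"

text \<open>Coefficients of the image of ser g w under a kernel.\<close>
definition conv :: "(nat \<Rightarrow> 'k) \<Rightarrow> (nat \<Rightarrow> 'k \<Rightarrow> 'k) \<Rightarrow> 'k \<Rightarrow> nat \<Rightarrow> 'k" where
  "conv w K g = (\<lambda>t. \<Sum>n\<le>t. w n * K (t - n) (g + grid n))"

text \<open>Coefficients of f on its grid, and the kernel of P: P z^\<beta> = \<Sum>_j pcoef1 j \<beta> z^(\<beta>-\<lambda>+j/r).\<close>
definition fcoef :: "nat \<Rightarrow> 'k" where "fcoef i = f (grid i - lowering)"

definition pcoef1 :: "nat \<Rightarrow> 'k \<Rightarrow> 'k" where
  "pcoef1 j \<beta> = ((if j = m then \<beta> else 0) + fcoef j) / C"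

lemma r0: "(of_nat r :: 'k) \<noteq> 0" using r by simp

lemma grid_inj[simp]: "grid a = grid b \<longleftrightarrow> a = b"
  using r0 by (simp add: grid_def)

lemma grid_eq0[simp]: "grid n = 0 \<longleftrightarrow> n = 0"
  using r0 by (simp add: grid_def)

lemma grid_0[simp]: "grid 0 = 0" by simp

lemma grid_add: "grid (a + b) = grid a + grid b"
  by (simp add: grid_def add_divide_distrib)

lemma grid_sum_eq[simp]: "grid t = grid i + grid n \<longleftrightarrow> t = i + n"
  by (metis grid_add grid_inj)

lemma grid_diff: "n \<le> t \<Longrightarrow> grid (t - n) = grid t - grid n"
  by (metis add_diff_cancel_left' add_diff_inverse_nat grid_add not_less)

lemma lowering_grid: "lowering = 1 + grid m"
  by (simp add: lowering_def slope_def grid_def)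

lemma lowering_eq: "lowering = of_nat (m + r) / of_nat r"
  using r0 by (simp add: lowering_def slope_def field_simps)

lemma ser_at[simp]: "ser g w (g + grid n) = w n"
  unfolding ser_def by auto

lemma ser_out: "(\<And>n. e \<noteq> g + grid n) \<Longrightarrow> ser g w e = 0"
  unfolding ser_def by auto

lemma ser_cases: obtains n where "e = g + grid n" | "\<And>n. e \<noteq> g + grid n" by blast

lemma ser_eqI: "(\<And>t. v t = w t) \<Longrightarrow> ser g v = ser g w"
  by (metis ext)

lemma ser_eqD: "ser g v = ser g w \<Longrightarrow> v t = w t"
  by (metis ser_at)

lemma ser_of_support:
  assumes "\<And>e. c e \<noteq> 0 \<Longrightarrow> \<exists>n. e = g + grid n"
  shows "c = ser g (\<lambda>n. c (g + grid n))"
proof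
  fix e
  show "c e = ser g (\<lambda>n. c (g + grid n)) e"
    by (cases e rule: ser_cases[of _ g]) (use assms ser_out in auto)
qed

lemma ser_pointwise:
  "F 0 0 = 0 \<Longrightarrow> (\<lambda>e. F (ser g v e) (ser g w e)) = ser g (\<lambda>t. F (v t) (w t))"
  unfolding ser_def by auto

lemma ser_shift: "ser (g + grid m) w = ser g (\<lambda>t. if m \<le> t then w (t - m) else 0)"
proof
  fix e
  show "ser (g + grid m) w e = ser g (\<lambda>t. if m \<le> t then w (t - m) else 0) e"
  proof (cases e rule: ser_cases[of _ g])
    case (1 t)
    show ?thesis
    proof (cases "m \<le> t")
      case True
      then have "e = (g + grid m) + grid (t - m)" using 1 by (simp add: grid_diff)
      then have "ser (g + grid m) w e = w (t - m)" by (simp only: ser_at)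
      moreover have "ser g (\<lambda>t. if m \<le> t then w (t - m) else 0) e = w (t - m)"
        using True by (simp only: 1 ser_at) simp
      ultimately show ?thesis by simp
    next
      case False
      then have "e \<noteq> (g + grid m) + grid n" for n
        using 1 by (auto simp: grid_add[symmetric] add.assoc)
      then show ?thesis using 1 False ser_out by simp
    qed
  next
    case 2
    have "e \<noteq> (g + grid m) + grid n" for n using 2[of "m + n"] by (simp add: grid_add add.assoc)
    then show ?thesis using ser_out 2 by metis
  qed
qed

lemma mono_ser: "mono \<beta> = ser \<beta> (\<lambda>n. if n = 0 then 1 else 0)"
proof -
  have "mono \<beta> = ser \<beta> (\<lambda>n. mono \<beta> (\<beta> + grid n))"
    by (rule ser_of_support) (metis add.right_neutral grid_0 mono_def)
  then show ?thesis by (simp add: mono_def)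
qed

lemma mulz_ser: "mulz (ser g w) = ser (g + 1) w"
proof -
  have *: "(e - 1 = g + grid n) = (e = g + 1 + grid n)" for e n by (auto simp: algebra_simps)
  show ?thesis unfolding mulz_def ser_def * ..
qed

lemma ddz_ser: "ddz (ser g w) = ser (g - 1) (\<lambda>n. (g + grid n) * w n)"
proof -
  have *: "(e + 1 = g + grid n) = (e = g - 1 + grid n)" for e n by (auto simp: algebra_simps)
  show ?thesis unfolding ddz_def ser_def * by (rule ext) (auto intro!: arg_cong[where f = "\<lambda>n. (g + grid n) * w n"])
qed

lemma kernel_op_ser: "kernel_op \<sigma> K (ser g w) = ser (g - \<sigma>) (conv w K g)"
proof
  fix e
  let ?S = "{\<beta>. ser g w \<beta> \<noteq> 0 \<and> (\<exists>i::nat. e = \<beta> - \<sigma> + grid i)}"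
  let ?h = "\<lambda>\<beta>. ser g w \<beta> * K (THE i::nat. e = \<beta> - \<sigma> + grid i) \<beta>"
  show "kernel_op \<sigma> K (ser g w) e = ser (g - \<sigma>) (conv w K g) e"
  proof (cases "\<exists>t. e = g - \<sigma> + grid t")
    case True
    then obtain t where t: "e = g - \<sigma> + grid t" by blast
    have sub: "?S \<subseteq> (\<lambda>n. g + grid n) ` {..t}"
    proof
      fix \<beta> assume "\<beta> \<in> ?S"
      then obtain i where nz: "ser g w \<beta> \<noteq> 0" and i: "e = \<beta> - \<sigma> + grid i" by blast
      then obtain n where n: "\<beta> = g + grid n" using ser_out by blast
      have "grid t = grid (n + i)" using t i n by (simp add: grid_add algebra_simps)
      then show "\<beta> \<in> (\<lambda>n. g + grid n) ` {..t}" using n by auto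
    qed
    have ex: "\<And>n. n \<le> t \<Longrightarrow> e = g + grid n - \<sigma> + grid (t - n)" by (simp add: t grid_diff)
    have "kernel_op \<sigma> K (ser g w) e = sum ?h ?S" by (simp add: kernel_op_def)
    also have "\<dots> = sum ?h ((\<lambda>n. g + grid n) ` {..t})"
      by (rule sum.mono_neutral_left) (use sub ex in fastforce)+
    also have "\<dots> = (\<Sum>n\<le>t. ?h (g + grid n))"
      by (rule sum.reindex_cong[where l="\<lambda>n. g + grid n"]) (auto simp: inj_on_def)
    also have "\<dots> = conv w K g t"
      unfolding conv_def
    proof (rule sum.cong[OF refl])
      fix n assume "n \<in> {..t}"
      then have "(THE i::nat. e = g + grid n - \<sigma> + grid i) = t - n"
        by (intro the_equality) (auto simp: t grid_diff algebra_simps)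
      then show "?h (g + grid n) = w n * K (t - n) (g + grid n)" by simp
    qed
    finally show ?thesis using t by simp
  next
    case False
    have "?S = {}"
    proof (rule ccontr)
      assume "?S \<noteq> {}"
      then obtain \<beta> i where nz: "ser g w \<beta> \<noteq> 0" and i: "e = \<beta> - \<sigma> + grid i" by blast
      then obtain n where n: "\<beta> = g + grid n" using ser_out by blast
      have "e = g - \<sigma> + grid (n + i)" using i n by (simp add: grid_add algebra_simps)
      then show False using False by blast
    qed
    then have "kernel_op \<sigma> K (ser g w) e = 0" unfolding kernel_op_def by (simp only: sum.empty)
    then show ?thesis using False ser_out[of e "g - \<sigma>"] by simp
  qed
qed

lemma conv_delta: "conv w (\<lambda>i \<beta>. if i = 0 then 1 else 0) g = w"
proof
  fix t
  have "conv w (\<lambda>i \<beta>. if i = 0 then 1 else 0) g t = (\<Sum>n\<le>t. if n = t then w n else 0)"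
    unfolding conv_def by (rule sum.cong) auto
  then show "conv w (\<lambda>i \<beta>. if i = 0 then 1 else 0) g t = w t" by simp
qed

lemma conv_delta_left: "conv (\<lambda>n. if n = 0 then 1 else 0) K g = (\<lambda>t. K t g)"
proof
  fix t
  have "conv (\<lambda>n. if n = 0 then 1 else 0) K g t
      = (\<Sum>n\<le>t. if n = 0 then K (t - n) (g + grid n) else 0)"
    unfolding conv_def by (rule sum.cong) auto
  then show "conv (\<lambda>n. if n = 0 then 1 else 0) K g t = K t g" by simp
qed

lemma conv_conv:
  "conv (conv w K1 g) K2 (g - \<sigma>)
     = conv w (\<lambda>i \<beta>. \<Sum>j\<le>i. K1 j \<beta> * K2 (i - j) (\<beta> - \<sigma> + grid j)) g"
proof
  fix t
  define F where "F n j = w n * K1 j (g + grid n) * K2 (t - n - j) (g + grid n - \<sigma> + grid j)" for n j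
  have "conv (conv w K1 g) K2 (g - \<sigma>) t = (\<Sum>k\<le>t. \<Sum>n\<le>k. F n (k - n))"
    unfolding conv_def sum_distrib_right
  proof (intro sum.cong refl)
    fix k n assume "k \<in> {..t}" "n \<in> {..k}"
    then show "w n * K1 (k - n) (g + grid n) * K2 (t - k) (g - \<sigma> + grid k) = F n (k - n)"
      by (simp add: F_def grid_diff algebra_simps)
  qed
  also have "\<dots> = (\<Sum>(n,j)\<in>{(n,j). n + j \<le> t}. F n j)"
    by (rule sum.triangle_reindex_eq[symmetric])
  also have "\<dots> = (\<Sum>n\<le>t. \<Sum>j\<le>t - n. F n j)"
  proof -
    have "{(n,j). n + j \<le> t} = Sigma {..t} (\<lambda>n. {..t - n})" by auto
    then show ?thesis by (simp add: sum.Sigma)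
  qed
  also have "\<dots> = conv w (\<lambda>i \<beta>. \<Sum>j\<le>i. K1 j \<beta> * K2 (i - j) (\<beta> - \<sigma> + grid j)) g t"
    unfolding conv_def sum_distrib_left
    by (intro sum.cong refl) (simp add: F_def algebra_simps diff_diff_left)
  finally show "conv (conv w K1 g) K2 (g - \<sigma>) t
      = conv w (\<lambda>i \<beta>. \<Sum>j\<le>i. K1 j \<beta> * K2 (i - j) (\<beta> - \<sigma> + grid j)) g t" .
qed

lemma smul_ser: "smul (ser g1 v) (ser g2 w) = ser (g1 + g2) (\<lambda>t. \<Sum>n\<le>t. v (t - n) * w n)"
proof
  fix e
  let ?S = "{x. ser g1 v x \<noteq> 0 \<and> ser g2 w (e - x) \<noteq> 0}"
  let ?h = "\<lambda>x. ser g1 v x * ser g2 w (e - x)"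
  have support: "\<exists>i n. x = g1 + grid i \<and> e = g1 + g2 + grid (i + n)" if x: "x \<in> ?S" for x
  proof -
    obtain i where "x = g1 + grid i" using x ser_out by blast
    moreover obtain n where "e - x = g2 + grid n" using x ser_out by blast
    ultimately show ?thesis by (intro exI[of _ i] exI[of _ n]) (simp add: grid_add algebra_simps)
  qed
  show "smul (ser g1 v) (ser g2 w) e = ser (g1 + g2) (\<lambda>t. \<Sum>n\<le>t. v (t - n) * w n) e"
  proof (cases "\<exists>t. e = g1 + g2 + grid t")
    case True
    then obtain t where t: "e = g1 + g2 + grid t" by blast
    have "?S \<subseteq> (\<lambda>n. e - g2 - grid n) ` {..t}"
    proof
      fix x assume "x \<in> ?S"
      then obtain i n where "x = g1 + grid i" "e = g1 + g2 + grid (i + n)" using support by blast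
      moreover from this(2) t have "t = i + n" by simp
      ultimately have "t = i + n" "x = e - g2 - grid n" by (simp_all add: grid_add)
      then show "x \<in> (\<lambda>n. e - g2 - grid n) ` {..t}" by auto
    qed
    then have "smul (ser g1 v) (ser g2 w) e = sum ?h ((\<lambda>n. e - g2 - grid n) ` {..t})"
      unfolding smul_def by (intro sum.mono_neutral_left) auto
    also have "\<dots> = (\<Sum>n\<le>t. ?h (e - g2 - grid n))"
      by (rule sum.reindex_cong[where l="\<lambda>n. e - g2 - grid n"]) (auto simp: inj_on_def)
    also have "\<dots> = (\<Sum>n\<le>t. v (t - n) * w n)"
    proof (rule sum.cong[OF refl])
      fix n assume "n \<in> {..t}"
      then have "e - g2 - grid n = g1 + grid (t - n)" "e - (e - g2 - grid n) = g2 + grid n"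
        by (simp_all add: t grid_diff)
      then show "?h (e - g2 - grid n) = v (t - n) * w n" by (simp only: ser_at)
    qed
    finally show ?thesis using t by simp
  next
    case False
    then have "?S = {}" using support by blast
    then have "smul (ser g1 v) (ser g2 w) e = 0" unfolding smul_def by (simp only: sum.empty)
    then show ?thesis using False ser_out[of e "g1 + g2"] by simp
  qed
qed

lemma f_ser: "f = ser (- lowering) fcoef"
proof -
  have "\<exists>n. e = - lowering + grid n" if nz: "f e \<noteq> 0" for e
  proof -
    obtain i :: int where i: "i \<ge> - int (m + r)" "e = of_int i / of_nat r" using f_low[OF nz] by blast
    have "(of_nat (nat (i + int (m + r))) :: 'k) = of_int i + of_nat (m + r)"
      using i(1) by (simp add: of_nat_nat)
    then have "e = - lowering + grid (nat (i + int (m + r)))"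
      using r0 by (simp add: i(2) lowering_eq grid_def field_simps)
    then show ?thesis by blast
  qed
  then have "f = ser (- lowering) (\<lambda>n. f (- lowering + grid n))" by (rule ser_of_support)
  then show ?thesis by (simp add: fcoef_def[abs_def])
qed

lemma pcoef1_0: "pcoef1 0 \<beta> = 1"
proof -
  have "grid 0 - lowering = - of_nat (m + r) / of_nat r" by (simp add: lowering_eq minus_divide_left)
  then show ?thesis using mpos C f_lead by (simp add: pcoef1_def fcoef_def)
qed

lemma pcoef1_shift: "pcoef1 j (\<beta> + 1) = pcoef1 j \<beta> + (if j = m then 1 / C else 0)"
  by (simp add: pcoef1_def add_divide_distrib)

text \<open>P acts on series by the kernel pcoef1: the term \<beta> z^(\<beta>-1) of d/dz sits at
  position m, f contributes fcoef.\<close>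
lemma Pop_ser: "Pop C f (ser g w) = ser (g - lowering) (conv w pcoef1 g)"
proof -
  have d: "ddz (ser g w) = ser (g - lowering) (\<lambda>t. if m \<le> t then (g + grid (t - m)) * w (t - m) else 0)"
  proof -
    have "g - 1 = (g - lowering) + grid m" by (simp add: lowering_grid)
    then show ?thesis by (simp only: ddz_ser ser_shift)
  qed
  have s: "smul f (ser g w) = ser (g - lowering) (\<lambda>t. \<Sum>n\<le>t. fcoef (t - n) * w n)"
    using smul_ser[of "- lowering" fcoef g w] f_ser by simp
  have c: "(\<Sum>n\<le>t. w n * (if t - n = m then g + grid n else 0))
      = (if m \<le> t then (g + grid (t - m)) * w (t - m) else 0)" for t
  proof (cases "m \<le> t")
    case True
    have "(\<Sum>n\<le>t. w n * (if t - n = m then g + grid n else 0))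
        = (\<Sum>n\<le>t. if n = t - m then w (t - m) * (g + grid (t - m)) else 0)"
      by (rule sum.cong) (use True in auto)
    then show ?thesis using True by (simp add: mult.commute)
  qed (auto intro: sum.neutral)
  have "conv w pcoef1 g = (\<lambda>t. ((if m \<le> t then (g + grid (t - m)) * w (t - m) else 0)
      + (\<Sum>n\<le>t. fcoef (t - n) * w n)) / C)"
    unfolding conv_def pcoef1_def c[symmetric]
    by (simp add: sum_divide_distrib sum.distrib[symmetric] algebra_simps add_divide_distrib)
  moreover have "Pop C f (ser g w) = ser (g - lowering) (\<lambda>t.
      ((if m \<le> t then (g + grid (t - m)) * w (t - m) else 0) + (\<Sum>n\<le>t. fcoef (t - n) * w n)) / C)"
    unfolding Pop_def dop_def d s by (rule ser_pointwise[where F = "\<lambda>x y. (x + y) / C"]) simp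
  ultimately show ?thesis by simp
qed

lemma space_ser:
  assumes "c \<in> space r \<gamma>"
  obtains j :: int where "c = ser (\<gamma> + of_int j / of_nat r) (\<lambda>n. c (\<gamma> + of_int j / of_nat r + grid n))"
proof -
  obtain N :: int where N: "\<And>e. c e \<noteq> 0 \<Longrightarrow> \<exists>i::int. i \<ge> - N \<and> e = \<gamma> + of_int i / of_nat r"
    using assms unfolding space_def in_space_def by blast
  define M where "M = max N 0"
  have "\<exists>n. e = (\<gamma> + of_int (- M) / of_nat r) + grid n" if nz: "c e \<noteq> 0" for e
  proof -
    obtain i where i: "i \<ge> - N" "e = \<gamma> + of_int i / of_nat r" using N nz by blast
    have "(of_nat (nat (i + M)) :: 'k) = of_int i + of_int M" using i(1) by (simp add: M_def of_nat_nat)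
    then have "e = (\<gamma> + of_int (- M) / of_nat r) + grid (nat (i + M))"
      using i(2) by (simp add: grid_def add_divide_distrib)
    then show ?thesis by blast
  qed
  then show ?thesis using that ser_of_support by blast
qed

lemma ser_space: "ser (\<gamma> + of_int j / of_nat r) w \<in> space r \<gamma>"
proof -
  have "\<exists>i::int. i \<ge> - (- j) \<and> e = \<gamma> + of_int i / of_nat r"
    if nz: "ser (\<gamma> + of_int j / of_nat r) w e \<noteq> 0" for e
  proof -
    obtain n where n: "e = \<gamma> + of_int j / of_nat r + grid n" using nz ser_out by blast
    show ?thesis by (rule exI[of _ "j + int n"]) (simp add: n grid_def add_divide_distrib)
  qed
  then show ?thesis unfolding space_def in_space_def by blast
qed

section \<open>Integer powers of P\<close>

text \<open>p_i(n,\<beta>), computed by the recursion P^(n+1) = P P^n.\<close>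
fun piter :: "nat \<Rightarrow> nat \<Rightarrow> 'k \<Rightarrow> 'k" where
  "piter i 0 \<beta> = (if i = 0 then 1 else 0)"
| "piter i (Suc n) \<beta> = (\<Sum>j\<le>i. piter j n \<beta> * pcoef1 (i - j) (\<beta> - lowering * of_nat n + grid j))"

lemma Popn_ser: "(Pop C f ^^ n) (ser g w) = ser (g - lowering * of_nat n) (conv w (\<lambda>i \<beta>. piter i n \<beta>) g)"
proof (induction n arbitrary: g w)
  case 0 then show ?case by (simp add: conv_delta)
next
  case (Suc n)
  have "(Pop C f ^^ Suc n) (ser g w)
      = Pop C f (ser (g - lowering * of_nat n) (conv w (\<lambda>i \<beta>. piter i n \<beta>) g))"
    using Suc by simp
  also have "\<dots> = ser (g - lowering * of_nat n - lowering)
      (conv (conv w (\<lambda>i \<beta>. piter i n \<beta>) g) pcoef1 (g - lowering * of_nat n))"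
    by (rule Pop_ser)
  also have "\<dots> = ser (g - lowering * of_nat (Suc n)) (conv w (\<lambda>i \<beta>. piter i (Suc n) \<beta>) g)"
    by (simp add: conv_conv algebra_simps)
  finally show ?case .
qed

text \<open>Composition law for integer powers, read off from P^(a+b) = P^b P^a applied to z^\<beta>.\<close>
lemma piter_add:
  "(\<Sum>j\<le>i. piter j a \<beta> * piter (i - j) b (\<beta> - lowering * of_nat a + grid j)) = piter i (a + b) \<beta>"
proof -
  let ?d = "\<lambda>n::nat. if n = 0 then 1 else (0::'k)"
  let ?g = "\<beta> - lowering * of_nat (b + a)"
  let ?prod = "\<lambda>t. \<Sum>j\<le>t. piter j a \<beta> * piter (t - j) b (\<beta> - lowering * of_nat a + grid j)"
  have "(Pop C f ^^ (b + a)) (ser \<beta> ?d) = (Pop C f ^^ b) ((Pop C f ^^ a) (ser \<beta> ?d))"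
    by (simp add: funpow_add)
  also have "\<dots> = ser (\<beta> - lowering * of_nat a - lowering * of_nat b)
      (conv (conv ?d (\<lambda>i \<beta>. piter i a \<beta>) \<beta>) (\<lambda>i \<beta>. piter i b \<beta>) (\<beta> - lowering * of_nat a))"
    by (simp only: Popn_ser)
  also have "\<dots> = ser ?g ?prod"
    by (simp only: conv_conv) (simp add: conv_delta_left algebra_simps)
  finally have "ser ?g (\<lambda>t. piter t (b + a) \<beta>) = ser ?g ?prod"
    by (simp add: Popn_ser conv_delta_left)
  from ser_eqD[OF this, of i] show ?thesis by (simp add: add.commute)
qed

lemma piter_1: "piter i 1 \<beta> = pcoef1 i \<beta>"
proof -
  have "piter i 1 \<beta>
      = (\<Sum>j\<le>i. (if j = 0 then 1 else 0) * pcoef1 (i - j) (\<beta> - lowering * 0 + grid j))"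
    by simp
  also have "\<dots> = (\<Sum>j\<le>i. if j = 0 then pcoef1 (i - j) (\<beta> + grid j) else 0)"
    by (rule sum.cong) auto
  finally show ?thesis by simp
qed

lemma piter_Suc_left:
  "piter i (Suc k) \<beta> = (\<Sum>j\<le>i. pcoef1 j \<beta> * piter (i - j) k (\<beta> - lowering + grid j))"
proof -
  from piter_add[where a=1 and b=k and i=i and \<beta>=\<beta>]
  have "(\<Sum>j\<le>i. pcoef1 j \<beta> * piter (i - j) k (\<beta> - lowering + grid j)) = piter i (1 + k) \<beta>"
    by (simp only: piter_1 of_nat_1 mult_1_right)
  then show ?thesis unfolding plus_1_eq_Suc by (rule sym)
qed

text \<open>Shift law: P^k z = z P^k + k/C P^(k-1) at the level of coefficients.  Induction on k
  via P^(k+1) = P^k P, using pcoef1 j (\<beta>+1) = pcoef1 j \<beta> + [j = m]/C.\<close>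
lemma piter_shift_z:
  "piter i k (\<beta> + 1) = piter i k \<beta> + of_nat k / C * (if m \<le> i then piter (i - m) (k - 1) \<beta> else 0)"
proof (induction k arbitrary: i \<beta>)
  case 0 then show ?case by simp
next
  case (Suc k)
  let ?b = "\<lambda>j. \<beta> - lowering + grid j"
  let ?rest = "\<lambda>j. if m \<le> i - j then pcoef1 j \<beta> * piter (i - j - m) (k - 1) (?b j) else 0"
  have "?b m + 1 = \<beta>" by (simp add: lowering_grid)
  have split: "piter i (Suc k) (\<beta> + 1) = (\<Sum>j\<le>i. pcoef1 j \<beta> * piter (i - j) k (?b j + 1))
      + (if m \<le> i then 1 / C * piter (i - m) k \<beta> else 0)"
  proof -
    have expand: "piter i (Suc k) (\<beta> + 1)
        = (\<Sum>j\<le>i. (pcoef1 j \<beta> + (if j = m then 1 / C else 0)) * piter (i - j) k (?b j + 1))"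
      by (simp only: piter_Suc_left pcoef1_shift) (simp add: algebra_simps)
    have "(\<Sum>j\<le>i. (if j = m then 1 / C else 0) * piter (i - j) k (?b j + 1))
        = (\<Sum>j\<le>i. if j = m then 1 / C * piter (i - m) k \<beta> else 0)"
      by (rule sum.cong) (auto simp: \<open>?b m + 1 = \<beta>\<close>)
    also have "\<dots> = (if m \<le> i then 1 / C * piter (i - m) k \<beta> else 0)"
      by (subst sum.delta) auto
    finally show ?thesis using expand by (simp only: distrib_right sum.distrib)
  qed
  have ih: "(\<Sum>j\<le>i. pcoef1 j \<beta> * piter (i - j) k (?b j + 1))
      = piter i (Suc k) \<beta> + of_nat k / C * (\<Sum>j\<le>i. ?rest j)"
  proof -
    have "pcoef1 j \<beta> * piter (i - j) k (?b j + 1)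
        = pcoef1 j \<beta> * piter (i - j) k (?b j) + of_nat k / C * ?rest j" for j
      by (simp only: Suc.IH) (simp add: algebra_simps)
    then show ?thesis by (simp only: sum.distrib sum_distrib_left piter_Suc_left)
  qed
  have rest: "of_nat k / C * (\<Sum>j\<le>i. ?rest j) = of_nat k / C * (if m \<le> i then piter (i - m) k \<beta> else 0)"
  proof (cases k)
    case (Suc k')
    have "(\<Sum>j\<le>i - m. pcoef1 j \<beta> * piter (i - j - m) (k - 1) (?b j)) = piter (i - m) k \<beta>"
      unfolding Suc diff_Suc_1 piter_Suc_left by (rule sum.cong) (auto simp: diff_diff_left add.commute)
    then show ?thesis unfolding sum_if_le by simp
  qed simp
  have "piter i (Suc k) (\<beta> + 1) = piter i (Suc k) \<beta>
      + of_nat k / C * (if m \<le> i then piter (i - m) k \<beta> else 0)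
      + (if m \<le> i then 1 / C * piter (i - m) k \<beta> else 0)"
    by (simp only: split ih rest)
  then show ?case by (simp add: algebra_simps add_divide_distrib del: piter.simps)
qed


section \<open>Interpolation: complex powers\<close>

text \<open>pcoef1 j \<beta> is affine in \<beta>.\<close>
lemma bipoly_pcoef1: "bipoly G \<Longrightarrow> bipoly (\<lambda>a b. pcoef1 k (G a b))"
  unfolding pcoef1_def by (intro bipoly_divide bipoly_add bipoly_if bipoly_const) auto

text \<open>p_i(n,\<beta>) as a sum over k < n of terms involving only p_j(k,\<beta>) with j < i
  (since pcoef1 0 = 1), the form needed for induction on i.\<close>
lemma piter_sum: "piter i n \<beta> = (if i = 0 then 1 else 0) + (\<Sum>k<n. \<Sum>j<i. piter j k \<beta> * pcoef1 (i - j) (\<beta> - lowering * of_nat k + grid j))"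
proof (induction n)
  case 0 then show ?case by simp
next
  case (Suc n)
  have "{..i} = insert i {..<i}" by auto
  then have "piter i (Suc n) \<beta> = piter i n \<beta> + (\<Sum>j<i. piter j n \<beta> * pcoef1 (i - j) (\<beta> - lowering * of_nat n + grid j))"
    by (simp add: pcoef1_0)
  then show ?case using Suc by simp
qed

lemma piter_bipoly: "\<exists>F. bipoly F \<and> (\<forall>n \<beta>. F (of_nat n) \<beta> = piter i n \<beta>)"
proof (induction i rule: less_induct)
  case (less i)
  define Fs where "Fs j = (SOME F. bipoly F \<and> (\<forall>n \<beta>. F (of_nat n) \<beta> = piter j n \<beta>))" for j
  have Fs: "bipoly (Fs j)" "\<And>n \<beta>. Fs j (of_nat n) \<beta> = piter j n \<beta>" if "j < i" for j
    using someI_ex[OF less[OF that]] unfolding Fs_def by blast+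
  define g where "g a b = (\<Sum>j<i. Fs j a b * pcoef1 (i - j) (b - lowering * a + grid j))" for a b
  have "bipoly g" unfolding g_def
    by (intro bipoly_sum bipoly_mult bipoly_pcoef1 bipoly_diff bipoly_add bipoly_const bipoly_snd bipoly_fst) (auto simp: Fs)
  then obtain G where G: "bipoly G" "\<And>n b. G (of_nat n) b = (\<Sum>k<n. g (of_nat k) b)"
    using bipoly_partial_sum by blast
  show ?case
  proof (intro exI[of _ "\<lambda>a b. (if i = 0 then 1 else 0) + G a b"] conjI allI)
    show "bipoly (\<lambda>a b. (if i = 0 then 1 else 0) + G a b)" by (intro bipoly_add bipoly_const G(1))
    fix n \<beta>
    show "(if i = 0 then 1 else 0) + G (of_nat n) \<beta> = piter i n \<beta>"
      by (simp add: G(2) g_def piter_sum[of i n] Fs)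
  qed
qed

definition pinterp :: "nat \<Rightarrow> 'k \<Rightarrow> 'k \<Rightarrow> 'k" where
  "pinterp i = (SOME F. bipoly F \<and> (\<forall>n \<beta>. F (of_nat n) \<beta> = piter i n \<beta>))"

lemma pinterp_bipoly: "bipoly (pinterp i)"
  and pinterp_nat: "pinterp i (of_nat n) \<beta> = piter i n \<beta>"
  using someI_ex[OF piter_bipoly[of i]] unfolding pinterp_def by blast+

lemma pnat_piter: "pnat r m C f i n \<beta> = piter i n \<beta>"
proof -
  have "(Pop C f ^^ n) (mono \<beta>) = ser (\<beta> - lowering * of_nat n) (\<lambda>t. piter t n \<beta>)"
    by (simp add: mono_ser Popn_ser conv_delta_left)
  moreover have "\<beta> - (1 + slope r m) * of_nat n + of_nat i / of_nat r = (\<beta> - lowering * of_nat n) + grid i"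
    by (simp add: lowering_def grid_def)
  ultimately show ?thesis unfolding pnat_def by (simp only: ser_at)
qed

lemma pcoef_pinterp: "pcoef r m C f i \<alpha> \<beta> = pinterp i \<alpha> \<beta>"
proof -
  obtain q where q: "\<And>a. pinterp i a \<beta> = poly q a" using bipoly_poly_in_fst[OF pinterp_bipoly] by blast
  have "(THE q'. \<forall>n::nat. poly q' (of_nat n) = pnat r m C f i n \<beta>) = q"
  proof (rule the_equality)
    show "\<forall>n. poly q (of_nat n) = pnat r m C f i n \<beta>" by (simp add: pnat_piter q[symmetric] pinterp_nat)
  next
    fix q' assume "\<forall>n::nat. poly q' (of_nat n) = pnat r m C f i n \<beta>"
    then have "\<And>n. poly (q' - q) (of_nat n) = 0" by (simp add: pnat_piter q[symmetric] pinterp_nat)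
    then show "q' = q" using poly_vanishing_on_nats by fastforce
  qed
  then show ?thesis unfolding pcoef_def by (simp add: q)
qed

lemma bipoly_pinterp: "bipoly G1 \<Longrightarrow> bipoly G2 \<Longrightarrow> bipoly (\<lambda>a b. pinterp j (G1 a b) (G2 a b))"
  by (rule bipoly_subst[OF pinterp_bipoly])

lemma pinterp_0: "pinterp i 0 \<beta> = (if i = 0 then 1 else 0)"
  using pinterp_nat[of i 0 \<beta>] by simp

lemma pinterp_1: "pinterp i 1 \<beta> = pcoef1 i \<beta>"
  by (metis pinterp_nat of_nat_1 piter_1)

lemma pinterp_add: "(\<Sum>j\<le>i. pinterp j a \<beta> * pinterp (i - j) b (\<beta> - lowering * a + grid j)) = pinterp i (a + b) \<beta>"
proof -
  define F where "F = (\<lambda>a b. \<Sum>j\<le>i. pinterp j a \<beta> * pinterp (i - j) b (\<beta> - lowering * a + grid j))"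
  define G where "G = (\<lambda>a b. pinterp i (a + b) \<beta>)"
  have "F a b = G a b"
  proof (rule bipoly_eq[of F G])
    show "bipoly F" unfolding F_def
      by (intro bipoly_sum bipoly_mult bipoly_pinterp bipoly_add bipoly_diff bipoly_const bipoly_fst bipoly_snd) auto
    show "bipoly G" unfolding G_def
      by (intro bipoly_pinterp bipoly_add bipoly_const bipoly_fst bipoly_snd)
    fix n k :: nat
    show "F (of_nat n) (of_nat k) = G (of_nat n) (of_nat k)"
      unfolding F_def G_def
      using piter_add[where i=i and a=n and \<beta>=\<beta> and b=k] pinterp_nat[of i "n + k" \<beta>] by (simp add: pinterp_nat)
  qed
  then show ?thesis by (simp add: F_def G_def)
qed

lemma pinterp_shift_z: "pinterp i a (\<beta> + 1) = pinterp i a \<beta> + a / C * (if m \<le> i then pinterp (i - m) (a - 1) \<beta> else 0)"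
proof -
  define F where "F = (\<lambda>a (b::'k). pinterp i a (\<beta> + 1))"
  define G where "G = (\<lambda>a (b::'k). pinterp i a \<beta> + a / C * (if m \<le> i then pinterp (i - m) (a - 1) \<beta> else 0))"
  have "F a 0 = G a 0"
  proof (rule bipoly_eq[of F G])
    show "bipoly F" unfolding F_def
      by (intro bipoly_pinterp bipoly_add bipoly_const bipoly_fst bipoly_snd)
    show "bipoly G" unfolding G_def
      by (intro bipoly_pinterp bipoly_add bipoly_mult bipoly_divide bipoly_if bipoly_diff bipoly_const bipoly_fst bipoly_snd)
    fix n k :: nat
    show "F (of_nat n) (of_nat k) = G (of_nat n) (of_nat k)"
      unfolding F_def G_def
    proof (cases n)
      case 0 then show "pinterp i (of_nat n) (\<beta> + 1) = pinterp i (of_nat n) \<beta> + of_nat n / C * (if m \<le> i then pinterp (i - m) (of_nat n - 1) \<beta> else 0)"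
        by (simp add: pinterp_0)
    next
      case (Suc n')
      have e: "(of_nat n :: 'k) - 1 = of_nat n'" using Suc by simp
      show "pinterp i (of_nat n) (\<beta> + 1) = pinterp i (of_nat n) \<beta> + of_nat n / C * (if m \<le> i then pinterp (i - m) (of_nat n - 1) \<beta> else 0)"
        unfolding e pinterp_nat piter_shift_z[of i n \<beta>] by (simp only: Suc diff_Suc_1)
    qed
  qed
  then show ?thesis by (simp add: F_def G_def)
qed


section \<open>The operators P^\<alpha>\<close>

lemma Ppow_kernel_op: "Ppow r m C f \<alpha> c = kernel_op (lowering * \<alpha>) (\<lambda>i \<beta>. pinterp i \<alpha> \<beta>) c"
  unfolding Ppow_def kernel_op_def lowering_def grid_def pcoef_pinterp ..

lemma Ppow_ser:
  "Ppow r m C f \<alpha> (ser g w) = ser (g - lowering * \<alpha>) (conv w (\<lambda>i \<beta>. pinterp i \<alpha> \<beta>) g)"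
  by (simp only: Ppow_kernel_op kernel_op_ser)

lemma Ppow_add_ser: "Ppow r m C f b (Ppow r m C f a (ser g w)) = Ppow r m C f (a + b) (ser g w)"
proof -
  have "g - lowering * a - lowering * b = g - lowering * (a + b)" by (simp add: algebra_simps)
  then show ?thesis by (simp only: Ppow_ser conv_conv pinterp_add)
qed

lemma Ppow_0_ser: "Ppow r m C f 0 (ser g w) = ser g w"
  by (simp add: Ppow_ser pinterp_0 conv_delta)

lemma dop_ser: "dop f (ser g w) = (\<lambda>e. C * Ppow r m C f 1 (ser g w) e)"
proof -
  have "Ppow r m C f 1 (ser g w) = Pop C f (ser g w)"
    by (simp add: Ppow_ser Pop_ser pinterp_1)
  then show ?thesis using C by (simp add: Pop_def)
qed

lemma Ppow_scale_ser: "Ppow r m C f a (\<lambda>e. k * ser g w e) = (\<lambda>e. k * Ppow r m C f a (ser g w) e)"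
proof -
  have scale: "(\<lambda>e. k * ser h v e) = ser h (\<lambda>t. k * v t)" for h v
    by (rule ser_pointwise[where F = "\<lambda>_ y. k * y"]) simp
  have "conv (\<lambda>t. k * w t) K g = (\<lambda>t. k * conv w K g t)" for K
    by (simp add: conv_def sum_distrib_left mult.assoc)
  then show ?thesis by (simp only: scale Ppow_ser)
qed

text \<open>Shift law on series: P^\<alpha> z = z P^\<alpha> + \<alpha>/C P^(\<alpha>-1).  The exponent shift
  \<lambda>(\<alpha>-1) = \<lambda>\<alpha> - 1 - m/r aligns the second term m grid steps later.\<close>
lemma Ppow_mulz_ser:
  "Ppow r m C f \<alpha> (mulz (ser g w))
     = (\<lambda>e. mulz (Ppow r m C f \<alpha> (ser g w)) e + \<alpha> / C * Ppow r m C f (\<alpha> - 1) (ser g w) e)"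
proof -
  let ?G = "g - lowering * \<alpha> + 1"
  let ?K = "\<lambda>a i \<beta>. pinterp i a \<beta>"
  have shift: "conv w (?K \<alpha>) (g + 1) t
      = conv w (?K \<alpha>) g t + \<alpha> / C * (if m \<le> t then conv w (?K (\<alpha> - 1)) g (t - m) else 0)" for t
  proof -
    have "w n * pinterp (t - n) \<alpha> (g + 1 + grid n) = w n * pinterp (t - n) \<alpha> (g + grid n)
        + \<alpha> / C * (if m \<le> t - n then w n * pinterp (t - n - m) (\<alpha> - 1) (g + grid n) else 0)" for n
      using pinterp_shift_z[of "t - n" \<alpha> "g + grid n"] by (simp add: algebra_simps)
    then have "conv w (?K \<alpha>) (g + 1) t = conv w (?K \<alpha>) g t
        + \<alpha> / C * (\<Sum>n\<le>t. if m \<le> t - n then w n * pinterp (t - n - m) (\<alpha> - 1) (g + grid n) else 0)"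
      by (simp add: conv_def sum.distrib sum_distrib_left add.commute add.left_commute)
    also have "(\<Sum>n\<le>t. if m \<le> t - n then w n * pinterp (t - n - m) (\<alpha> - 1) (g + grid n) else 0)
        = (if m \<le> t then conv w (?K (\<alpha> - 1)) g (t - m) else 0)"
      unfolding sum_if_le conv_def by (auto intro!: sum.cong simp: diff_diff_left add.commute)
    finally show ?thesis .
  qed
  have lhs_exp: "g + 1 - lowering * \<alpha> = ?G" by simp
  have rhs_exp: "g - lowering * (\<alpha> - 1) = ?G + grid m" by (simp add: lowering_grid algebra_simps)
  have "Ppow r m C f \<alpha> (mulz (ser g w)) = ser ?G (conv w (?K \<alpha>) (g + 1))"
    by (simp only: mulz_ser Ppow_ser lhs_exp)
  moreover have "(\<lambda>e. mulz (Ppow r m C f \<alpha> (ser g w)) e + \<alpha> / C * Ppow r m C f (\<alpha> - 1) (ser g w) e)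
      = ser ?G (\<lambda>t. conv w (?K \<alpha>) g t + \<alpha> / C * (if m \<le> t then conv w (?K (\<alpha> - 1)) g (t - m) else 0))"
    unfolding Ppow_ser mulz_ser rhs_exp ser_shift
    by (rule ser_pointwise[where F = "\<lambda>x y. x + \<alpha> / C * y"]) simp
  ultimately show ?thesis using ser_eqI[OF shift] by simp
qed

lemma Ppow_space:
  assumes "c \<in> space r \<gamma>"
  shows "Ppow r m C f \<alpha> c \<in> space r (\<gamma> - (1 + slope r m) * \<alpha>)"
proof -
  obtain j :: int where c: "c = ser (\<gamma> + of_int j / of_nat r) (\<lambda>n. c (\<gamma> + of_int j / of_nat r + grid n))"
    using space_ser[OF assms] by blast
  have "\<gamma> + of_int j / of_nat r - lowering * \<alpha> = (\<gamma> - (1 + slope r m) * \<alpha>) + of_int j / of_nat r"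
    by (simp add: lowering_def algebra_simps)
  then show ?thesis by (subst c) (simp only: Ppow_ser ser_space)
qed

lemma space_is_ser: "c \<in> space r \<gamma> \<Longrightarrow> \<exists>g w. c = ser g w"
  by (metis space_ser)

lemma Ppow_add: "c \<in> space r \<gamma> \<Longrightarrow> Ppow r m C f b (Ppow r m C f a c) = Ppow r m C f (a + b) c"
  using Ppow_add_ser space_is_ser by metis

lemma Ppow_0: "c \<in> space r \<gamma> \<Longrightarrow> Ppow r m C f 0 c = c"
  using Ppow_0_ser space_is_ser by metis

lemma Ppow_mulz: "c \<in> space r \<gamma> \<Longrightarrow>
    Ppow r m C f \<alpha> (mulz c) = (\<lambda>e. mulz (Ppow r m C f \<alpha> c) e + \<alpha> / C * Ppow r m C f (\<alpha> - 1) c e)"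
  using Ppow_mulz_ser space_is_ser by metis

text \<open>P^\<alpha> commutes with \<partial>_z = C P^1 because P^\<alpha> P^1 = P^(1+\<alpha>) = P^1 P^\<alpha>.\<close>
lemma Ppow_dop:
  assumes c: "c \<in> space r \<gamma>"
  shows "Ppow r m C f \<alpha> (dop f c) = dop f (Ppow r m C f \<alpha> c)"
proof -
  obtain g w where gw: "c = ser g w" using space_is_ser[OF c] by blast
  obtain g' w' where g'w': "Ppow r m C f \<alpha> c = ser g' w'" using gw Ppow_ser by blast
  have "Ppow r m C f \<alpha> (dop f c) = (\<lambda>e. C * Ppow r m C f \<alpha> (Ppow r m C f 1 c) e)"
    by (simp only: gw dop_ser Ppow_ser[where \<alpha> = 1] Ppow_scale_ser)
  also have "\<dots> = (\<lambda>e. C * Ppow r m C f 1 (Ppow r m C f \<alpha> c) e)"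
    using Ppow_add[OF c, of 1 \<alpha>] Ppow_add[OF c, of \<alpha> 1] by (simp add: add.commute)
  also have "\<dots> = dop f (Ppow r m C f \<alpha> c)"
    unfolding g'w' dop_ser ..
  finally show ?thesis .
qed

end

theorem proposition7p3:
  fixes r m :: nat and C :: "'k::{alg_closed_field, field_char_0}"
    and f :: "'k \<Rightarrow> 'k"
  assumes r: "r > 0"
    and slope_pos: "m > 0"
    and f_space: "f \<in> space r 0"
    and f_lead: "f (- of_nat (m + r) / of_nat r) = C"
    and f_low: "\<And>e. f e \<noteq> 0 \<Longrightarrow> \<exists>i::int. i \<ge> - int (m + r) \<and> e = of_int i / of_nat r"
    and C: "C \<noteq> 0"
    and irred: "irreducible_DK r f"
  shows "\<forall>\<alpha> \<gamma>::'k. \<forall>c \<in> space r \<gamma>.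
      Ppow r m C f \<alpha> c \<in> space r (\<gamma> - (1 + slope r m) * \<alpha>)
    \<and> Ppow r m C f (- \<alpha>) (Ppow r m C f \<alpha> c) = c
    \<and> Ppow r m C f \<alpha> (Ppow r m C f (- \<alpha>) c) = c
    \<and> Ppow r m C f \<alpha> (dop f c) = dop f (Ppow r m C f \<alpha> c)
    \<and> Ppow r m C f \<alpha> (mulz c) =
        (\<lambda>e. mulz (Ppow r m C f \<alpha> c) e + \<alpha> / C * Ppow r m C f (\<alpha> - 1) c e)"
proof (intro allI ballI)
  interpret connection r m C f using r slope_pos f_lead f_low C by unfold_locales
  fix \<alpha> \<gamma> :: 'k and c assume c: "c \<in> space r \<gamma>"
  have "Ppow r m C f (- \<alpha>) (Ppow r m C f \<alpha> c) = c" "Ppow r m C f \<alpha> (Ppow r m C f (- \<alpha>) c) = c"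
    using Ppow_add[OF c] Ppow_0[OF c] by simp_all
  then show "Ppow r m C f \<alpha> c \<in> space r (\<gamma> - (1 + slope r m) * \<alpha>)
    \<and> Ppow r m C f (- \<alpha>) (Ppow r m C f \<alpha> c) = c
    \<and> Ppow r m C f \<alpha> (Ppow r m C f (- \<alpha>) c) = c
    \<and> Ppow r m C f \<alpha> (dop f c) = dop f (Ppow r m C f \<alpha> c)
    \<and> Ppow r m C f \<alpha> (mulz c) =
        (\<lambda>e. mulz (Ppow r m C f \<alpha> c) e + \<alpha> / C * Ppow r m C f (\<alpha> - 1) c e)"
    using Ppow_space[OF c] Ppow_dop[OF c] Ppow_mulz[OF c] by blast
qed

end
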